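(* Let $G$ be a countable discrete group acting minimally by homeomorphisms on a compact Hausdorff space $X$, and let $\mu\in P(G,C(X))$ have full support. Then every $\mu$-stationary state on $C(X)$ is faithful.
   Context: Minimal means every orbit is dense; $(g\cdot f)(x)=f(g^{-1}x)$. A generalized $(G,C(X))$-probability measure is a formal sum $\mu=\sum_{i\in I}f_is_if_i$ with $I$ an index set, $s_i\in G$ (repetitions allowed), $f_i\in C(X)$, $f_i\ge0$, $f_i\ne0$, $\sum_if_i^2=1$; $P(G,C(X))$ is the set of these. For $h\in C(X)$, $\mu h=\sum_if_i(s_i\cdot h)f_i$; a state $\tau$ on $C(X)$ is $\mu$-stationary if $\tau(\mu h)=\tau(h)$ for all $h$. $\mu$ has full support if, writing $I_s=\{i: s_i=s\}$, for each $s\in G$ there is $\delta>0$ with $\sum_{i\in I_s}f_i^2\ge\delta$ (equivalently, for all $s\in G$, $x\in X$ there is $i\in I_s$ with $f_i(x)>0$). *)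

theory Defs
  imports "HOL-Analysis.Analysis"
begin

text \<open>A group G (written additively via the type class group_add, so the
group inverse of g is -g) acting on X by act.\<close>

definition group_action :: "('g::group_add \<Rightarrow> 'x \<Rightarrow> 'x) \<Rightarrow> bool" where
  "group_action act \<longleftrightarrow> (\<forall>x. act 0 x = x) \<and> (\<forall>g h x. act (g + h) x = act g (act h x))"

text \<open>Action by homeomorphisms: each act g is continuous (its inverse act (-g) is then
continuous as well).\<close>
definition action_by_homeos :: "('g::group_add \<Rightarrow> 'x::topological_space \<Rightarrow> 'x) \<Rightarrow> bool" where
  "action_by_homeos act \<longleftrightarrow> group_action act \<and> (\<forall>g. continuous_on UNIV (act g))"

definition minimal_action :: "('g \<Rightarrow> 'x::topological_space \<Rightarrow> 'x) \<Rightarrow> bool" where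
  "minimal_action act \<longleftrightarrow> (\<forall>x. closure (range (\<lambda>g. act g x)) = UNIV)"

definition translate :: "('g::group_add \<Rightarrow> 'x \<Rightarrow> 'x) \<Rightarrow> 'g \<Rightarrow> ('x \<Rightarrow> 'a) \<Rightarrow> ('x \<Rightarrow> 'a)" where
  "translate act g h = (\<lambda>x. h (act (-g) x))"

text \<open>Generalized (G,C(X))-probability measure mu = sum_{i in I} f_i s_i f_i.
The identity sum_i f_i^2 = 1 in C(X) is stated pointwise (for nonnegative continuous
functions on a compact space this is equivalent to norm convergence by Dini).\<close>
definition gen_prob_measure ::
  "'i set \<Rightarrow> ('i \<Rightarrow> 'g) \<Rightarrow> ('i \<Rightarrow> 'x::topological_space \<Rightarrow> real) \<Rightarrow> bool" where
  "gen_prob_measure I s f \<longleftrightarrow>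
     (\<forall>i\<in>I. continuous_on UNIV (f i) \<and> (\<forall>x. f i x \<ge> 0) \<and> f i \<noteq> (\<lambda>x. 0)) \<and>
     (\<forall>x. ((\<lambda>i. (f i x)\<^sup>2) has_sum 1) I)"

definition mu_apply ::
  "('g::group_add \<Rightarrow> 'x \<Rightarrow> 'x) \<Rightarrow> 'i set \<Rightarrow> ('i \<Rightarrow> 'g) \<Rightarrow> ('i \<Rightarrow> 'x \<Rightarrow> real)
     \<Rightarrow> ('x \<Rightarrow> complex) \<Rightarrow> ('x \<Rightarrow> complex)" where
  "mu_apply act I s f h =
     (\<lambda>x. \<Sum>\<^sub>\<infinity>i\<in>I. complex_of_real (f i x) * translate act (s i) h x * complex_of_real (f i x))"

definition full_support :: "'i set \<Rightarrow> ('i \<Rightarrow> 'g) \<Rightarrow> ('i \<Rightarrow> 'x \<Rightarrow> real) \<Rightarrow> bool" where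
  "full_support I s f \<longleftrightarrow>
     (\<forall>g. \<exists>\<delta>>0. \<forall>x. (\<Sum>\<^sub>\<infinity>i\<in>{i\<in>I. s i = g}. (f i x)\<^sup>2) \<ge> \<delta>)"

text \<open>A state on the C*-algebra C(X) (complex-valued continuous functions):
linear, positive, unital functional. Only its values on continuous functions matter.\<close>
definition is_state :: "(('x::topological_space \<Rightarrow> complex) \<Rightarrow> complex) \<Rightarrow> bool" where
  "is_state \<tau> \<longleftrightarrow>
     (\<forall>a b h k. continuous_on UNIV h \<longrightarrow> continuous_on UNIV k \<longrightarrow>
        \<tau> (\<lambda>x. a * h x + b * k x) = a * \<tau> h + b * \<tau> k) \<and>
     (\<forall>h. continuous_on UNIV h \<longrightarrow> (\<forall>x. Im (h x) = 0 \<and> Re (h x) \<ge> 0) \<longrightarrow>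
        Im (\<tau> h) = 0 \<and> Re (\<tau> h) \<ge> 0) \<and>
     \<tau> (\<lambda>x. 1) = 1"

definition stationary_state ::
  "('g::group_add \<Rightarrow> 'x::topological_space \<Rightarrow> 'x) \<Rightarrow> 'i set \<Rightarrow> ('i \<Rightarrow> 'g) \<Rightarrow> ('i \<Rightarrow> 'x \<Rightarrow> real)
     \<Rightarrow> (('x \<Rightarrow> complex) \<Rightarrow> complex) \<Rightarrow> bool" where
  "stationary_state act I s f \<tau> \<longleftrightarrow> is_state \<tau> \<and>
     (\<forall>h. continuous_on UNIV h \<longrightarrow> \<tau> (mu_apply act I s f h) = \<tau> h)"

definition faithful_state :: "(('x::topological_space \<Rightarrow> complex) \<Rightarrow> complex) \<Rightarrow> bool" where
  "faithful_state \<tau> \<longleftrightarrow>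
     (\<forall>h. continuous_on UNIV h \<longrightarrow> \<tau> (\<lambda>x. cnj (h x) * h x) = 0 \<longrightarrow> h = (\<lambda>x. 0))"

end

theory Submission
  imports Defs
begin

text \<open>Let \<open>\<tau>\<close> be stationary and \<open>\<tau>(k) = 0\<close> for \<open>k = |h|\<^sup>2\<close>. Since
\<open>\<mu>k = \<Sum>\<^sub>i f\<^sub>i\<^sup>2 (s\<^sub>i \<cdot> k)\<close> dominates \<open>\<delta> (g \<cdot> k)\<close> by full support, positivity of \<open>\<tau>\<close> and
\<open>\<tau>(\<mu>k) = \<tau>(k) = 0\<close> force \<open>\<tau>(g \<cdot> k) = 0\<close> for every \<open>g\<close>. If \<open>k\<close> were nonzero,
minimality and compactness would give finitely many translates of \<open>k\<close> whose sum is
bounded below by a positive constant, so \<open>\<tau>(1) = 0\<close>, which is absurd.\<close>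

lemma state_linear:
  assumes "is_state \<tau>" "continuous_on UNIV h" "continuous_on UNIV k"
  shows "\<tau> (\<lambda>x. a * h x + b * k x) = a * \<tau> h + b * \<tau> k"
  using assms unfolding is_state_def by blast

lemma state_sum:
  fixes \<tau> :: "('x::topological_space \<Rightarrow> complex) \<Rightarrow> complex"
  assumes st: "is_state \<tau>" and "finite G"
    and "\<And>g. g \<in> G \<Longrightarrow> continuous_on UNIV (w g)"
  shows "\<tau> (\<lambda>x. \<Sum>g\<in>G. w g x) = (\<Sum>g\<in>G. \<tau> (w g))"
  using assms(2,3)
proof (induction G rule: finite_induct)
  case empty
  have "\<tau> (\<lambda>x. 0 * 1 + 0 * 1) = 0 * \<tau> (\<lambda>x. 1) + 0 * \<tau> (\<lambda>x. 1)"
    by (rule state_linear[OF st]) simp_all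
  then show ?case by simp
next
  case (insert g G)
  have "continuous_on UNIV (\<lambda>x. \<Sum>g\<in>G. w g x)"
    using insert by (intro continuous_intros) auto
  then have "\<tau> (\<lambda>x. 1 * w g x + 1 * (\<Sum>g\<in>G. w g x)) = 1 * \<tau> (w g) + 1 * \<tau> (\<lambda>x. \<Sum>g\<in>G. w g x)"
    using insert.prems by (intro state_linear[OF st]) auto
  then show ?case using insert by simp
qed

lemma state_nonneg_real:
  assumes "is_state \<tau>" "continuous_on UNIV u" "\<And>x. 0 \<le> u x"
  shows "Im (\<tau> (\<lambda>x. complex_of_real (u x))) = 0 \<and> 0 \<le> Re (\<tau> (\<lambda>x. complex_of_real (u x)))"
proof -
  have "continuous_on UNIV (\<lambda>x. complex_of_real (u x))"
    using assms(2) by (intro continuous_intros)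
  then show ?thesis using assms unfolding is_state_def by auto
qed

lemma state_eq_0_if_dominated:
  assumes st: "is_state \<tau>" and uc: "continuous_on UNIV u" and wc: "continuous_on UNIV w"
    and c: "0 < c" and w0: "\<And>x. 0 \<le> w x" and dom: "\<And>x. c * w x \<le> u x"
    and u0: "\<tau> (\<lambda>x. complex_of_real (u x)) = 0"
  shows "\<tau> (\<lambda>x. complex_of_real (w x)) = 0"
proof -
  let ?W = "\<tau> (\<lambda>x. complex_of_real (w x))"
  have "\<tau> (\<lambda>x. complex_of_real (u x - c * w x))
      = \<tau> (\<lambda>x. 1 * complex_of_real (u x) + (- complex_of_real c) * complex_of_real (w x))"
    by simp
  also have "\<dots> = 1 * \<tau> (\<lambda>x. complex_of_real (u x)) + (- complex_of_real c) * ?W"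
    using uc wc by (intro state_linear[OF st] continuous_intros)
  also have "\<dots> = - complex_of_real c * ?W"
    using u0 by simp
  finally have diff: "\<tau> (\<lambda>x. complex_of_real (u x - c * w x)) = - complex_of_real c * ?W" .
  have "Im (\<tau> (\<lambda>x. complex_of_real (u x - c * w x))) = 0 \<and>
        0 \<le> Re (\<tau> (\<lambda>x. complex_of_real (u x - c * w x)))"
    using uc wc dom by (intro state_nonneg_real[OF st] continuous_intros) (auto simp: algebra_simps)
  then have "0 \<le> Re (- complex_of_real c * ?W)" using diff by simp
  then have "Re ?W \<le> 0" using c by (simp add: mult_le_0_iff)
  moreover have "Im ?W = 0 \<and> 0 \<le> Re ?W" using state_nonneg_real[OF st wc w0] .
  ultimately show ?thesis by (simp add: complex_eq_iff)
qed

text \<open>A Dini-type argument: pointwise convergence of \<open>\<Sum> f\<^sub>i\<^sup>2\<close> to the constant \<open>1\<close>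
becomes uniform on a compact space because the partial sums increase.\<close>

lemma compact_finite_partial_sums_uniformly_close:
  fixes f :: "'i \<Rightarrow> 'x::topological_space \<Rightarrow> real"
  assumes cpt: "compact (UNIV :: 'x set)"
    and cont: "\<And>i. i \<in> I \<Longrightarrow> continuous_on UNIV (f i)"
    and hs: "\<And>x. ((\<lambda>i. (f i x)\<^sup>2) has_sum 1) I"
    and e: "e > 0"
  shows "\<exists>F. finite F \<and> F \<subseteq> I \<and> (\<forall>x. 1 - e < (\<Sum>i\<in>F. (f i x)\<^sup>2))"
proof -
  have "\<exists>F. finite F \<and> F \<subseteq> I \<and> 1 - e < (\<Sum>i\<in>F. (f i x)\<^sup>2)" for x
  proof -
    have "((\<lambda>F. \<Sum>i\<in>F. (f i x)\<^sup>2) \<longlongrightarrow> 1) (finite_subsets_at_top I)"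
      using hs[of x] by (simp add: has_sum_def)
    then have "eventually (\<lambda>F. 1 - e < (\<Sum>i\<in>F. (f i x)\<^sup>2)) (finite_subsets_at_top I)"
      using e by (intro order_tendstoD(1)) auto
    then show ?thesis unfolding eventually_finite_subsets_at_top by blast
  qed
  then obtain Fx where Fx: "\<And>x. finite (Fx x) \<and> Fx x \<subseteq> I \<and> 1 - e < (\<Sum>i\<in>Fx x. (f i x)\<^sup>2)"
    by metis
  define U where "U x = {y. 1 - e < (\<Sum>i\<in>Fx x. (f i y)\<^sup>2)}" for x
  have "open (U x)" for x
    unfolding U_def using Fx cont
    by (intro open_Collect_less continuous_intros) auto
  moreover have "UNIV \<subseteq> (\<Union>x\<in>UNIV. U x)" using Fx unfolding U_def by auto
  ultimately obtain D where D: "finite D" "UNIV \<subseteq> (\<Union>x\<in>D. U x)"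
    using compactE_image[OF cpt, of UNIV U] by (metis UNIV_I)
  define F where "F = (\<Union>x\<in>D. Fx x)"
  have "finite F" "F \<subseteq> I" using D Fx unfolding F_def by auto
  moreover have "1 - e < (\<Sum>i\<in>F. (f i y)\<^sup>2)" for y
  proof -
    obtain x where x: "x \<in> D" "y \<in> U x" using D by blast
    then have "1 - e < (\<Sum>i\<in>Fx x. (f i y)\<^sup>2)" unfolding U_def by auto
    also have "\<dots> \<le> (\<Sum>i\<in>F. (f i y)\<^sup>2)"
      using x \<open>finite F\<close> by (intro sum_mono2) (auto simp: F_def)
    finally show ?thesis .
  qed
  ultimately show ?thesis by blast
qed

lemma weighted_infsum_tail_bound:
  fixes f :: "'i \<Rightarrow> real" and v :: "'i \<Rightarrow> real"
  assumes hs: "((\<lambda>i. (f i)\<^sup>2) has_sum 1) I"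
    and v: "\<And>i. i \<in> I \<Longrightarrow> 0 \<le> v i \<and> v i \<le> B"
    and F: "finite F" "F \<subseteq> I"
  shows "(\<lambda>i. (f i)\<^sup>2 * v i) summable_on I"
    and "0 \<le> (\<Sum>\<^sub>\<infinity>i\<in>I. (f i)\<^sup>2 * v i) - (\<Sum>i\<in>F. (f i)\<^sup>2 * v i)"
    and "(\<Sum>\<^sub>\<infinity>i\<in>I. (f i)\<^sup>2 * v i) - (\<Sum>i\<in>F. (f i)\<^sup>2 * v i) \<le> B * (1 - (\<Sum>i\<in>F. (f i)\<^sup>2))"
proof -
  have s1: "(\<lambda>i. (f i)\<^sup>2) summable_on I" using hs by (auto simp: summable_on_def)
  have sB: "(\<lambda>i. B * (f i)\<^sup>2) summable_on A" if "A \<subseteq> I" for A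
    using summable_on_subset[OF s1 that] by (rule summable_on_cmult_right)
  have sA: "(\<lambda>i. (f i)\<^sup>2 * v i) summable_on A" if "A \<subseteq> I" for A
    using sB[OF that] by (rule summable_on_comparison_test)
      (use v that in \<open>auto simp: mult.commute mult_right_mono\<close>)
  show "(\<lambda>i. (f i)\<^sup>2 * v i) summable_on I" using sA by simp
  have IU: "I = F \<union> (I - F)" using F by auto
  have split_v: "(\<Sum>\<^sub>\<infinity>i\<in>I. (f i)\<^sup>2 * v i) = (\<Sum>i\<in>F. (f i)\<^sup>2 * v i) + (\<Sum>\<^sub>\<infinity>i\<in>I-F. (f i)\<^sup>2 * v i)"
    by (subst IU, subst infsum_Un_disjoint) (use F sA in auto)
  have split_1: "(\<Sum>\<^sub>\<infinity>i\<in>I. (f i)\<^sup>2) = (\<Sum>i\<in>F. (f i)\<^sup>2) + (\<Sum>\<^sub>\<infinity>i\<in>I-F. (f i)\<^sup>2)"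
    by (subst IU, subst infsum_Un_disjoint) (use F s1 summable_on_subset[OF s1] in auto)
  have "(\<Sum>\<^sub>\<infinity>i\<in>I. (f i)\<^sup>2) = 1" using hs by (rule infsumI)
  then have tail_1: "(\<Sum>\<^sub>\<infinity>i\<in>I-F. (f i)\<^sup>2) = 1 - (\<Sum>i\<in>F. (f i)\<^sup>2)" using split_1 by linarith
  have "0 \<le> (\<Sum>\<^sub>\<infinity>i\<in>I-F. (f i)\<^sup>2 * v i)" using v by (intro infsum_nonneg) auto
  then show "0 \<le> (\<Sum>\<^sub>\<infinity>i\<in>I. (f i)\<^sup>2 * v i) - (\<Sum>i\<in>F. (f i)\<^sup>2 * v i)" using split_v by simp
  have "(\<Sum>\<^sub>\<infinity>i\<in>I-F. (f i)\<^sup>2 * v i) \<le> (\<Sum>\<^sub>\<infinity>i\<in>I-F. B * (f i)\<^sup>2)"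
    using sA sB v by (intro infsum_mono) (auto simp: mult.commute mult_right_mono)
  also have "\<dots> = B * (1 - (\<Sum>i\<in>F. (f i)\<^sup>2))" by (simp add: infsum_cmult_right' tail_1)
  finally show "(\<Sum>\<^sub>\<infinity>i\<in>I. (f i)\<^sup>2 * v i) - (\<Sum>i\<in>F. (f i)\<^sup>2 * v i) \<le> B * (1 - (\<Sum>i\<in>F. (f i)\<^sup>2))"
    using split_v by simp
qed

lemma weighted_infsum_uniformly_approximable:
  fixes f v :: "'i \<Rightarrow> 'x::topological_space \<Rightarrow> real"
  assumes cpt: "compact (UNIV :: 'x set)"
    and cont: "\<And>i. i \<in> I \<Longrightarrow> continuous_on UNIV (f i)"
    and hs: "\<And>x. ((\<lambda>i. (f i x)\<^sup>2) has_sum 1) I"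
    and v: "\<And>i x. i \<in> I \<Longrightarrow> 0 \<le> v i x \<and> v i x \<le> B"
    and e: "e > 0"
  shows "\<exists>F. finite F \<and> F \<subseteq> I \<and>
           (\<forall>x. dist (\<Sum>i\<in>F. (f i x)\<^sup>2 * v i x) (\<Sum>\<^sub>\<infinity>i\<in>I. (f i x)\<^sup>2 * v i x) < e)"
proof -
  define \<epsilon> where "\<epsilon> = e / (\<bar>B\<bar> + 1)"
  have "\<epsilon> > 0" using e by (simp add: \<epsilon>_def)
  then obtain F where F: "finite F" "F \<subseteq> I" and close: "\<And>x. 1 - \<epsilon> < (\<Sum>i\<in>F. (f i x)\<^sup>2)"
    using compact_finite_partial_sums_uniformly_close[OF cpt cont hs] by blast
  have "dist (\<Sum>i\<in>F. (f i x)\<^sup>2 * v i x) (\<Sum>\<^sub>\<infinity>i\<in>I. (f i x)\<^sup>2 * v i x) < e" for x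
  proof -
    note tail = weighted_infsum_tail_bound[OF hs[of x] _ F]
    have rest: "0 \<le> 1 - (\<Sum>i\<in>F. (f i x)\<^sup>2)"
      using tail(2)[of "\<lambda>_. 1" 1] infsumI[OF hs[of x]] by simp
    have "(\<Sum>\<^sub>\<infinity>i\<in>I. (f i x)\<^sup>2 * v i x) - (\<Sum>i\<in>F. (f i x)\<^sup>2 * v i x)
        \<le> B * (1 - (\<Sum>i\<in>F. (f i x)\<^sup>2))"
      using tail(3)[of "\<lambda>i. v i x" B] v by blast
    also have "\<dots> \<le> \<bar>B\<bar> * \<epsilon>"
      using close[of x] rest by (intro order_trans[OF mult_right_mono mult_left_mono]) auto
    also have "\<dots> < e"
      using e by (simp add: \<epsilon>_def field_simps)
    finally show ?thesis
      using tail(2)[of "\<lambda>i. v i x" B] v by (simp add: dist_real_def)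
  qed
  with F show ?thesis by blast
qed

lemma continuous_on_weighted_infsum:
  fixes f v :: "'i \<Rightarrow> 'x::topological_space \<Rightarrow> real"
  assumes cpt: "compact (UNIV :: 'x set)"
    and cont: "\<And>i. i \<in> I \<Longrightarrow> continuous_on UNIV (f i)"
    and hs: "\<And>x. ((\<lambda>i. (f i x)\<^sup>2) has_sum 1) I"
    and vc: "\<And>i. i \<in> I \<Longrightarrow> continuous_on UNIV (v i)"
    and v: "\<And>i x. i \<in> I \<Longrightarrow> 0 \<le> v i x \<and> v i x \<le> B"
  shows "continuous_on UNIV (\<lambda>x. \<Sum>\<^sub>\<infinity>i\<in>I. (f i x)\<^sup>2 * v i x)"
proof -
  have pos: "0 < inverse (real (Suc n))" for n by simp
  have "\<forall>n. \<exists>F. finite F \<and> F \<subseteq> I \<and>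
          (\<forall>x. dist (\<Sum>i\<in>F. (f i x)\<^sup>2 * v i x) (\<Sum>\<^sub>\<infinity>i\<in>I. (f i x)\<^sup>2 * v i x)
                < inverse (real (Suc n)))"
    by (rule allI, rule weighted_infsum_uniformly_approximable) (fact cpt cont hs v pos)+
  from choice[OF this] obtain Fn where Fn: "\<forall>n. finite (Fn n) \<and> Fn n \<subseteq> I \<and>
          (\<forall>x. dist (\<Sum>i\<in>Fn n. (f i x)\<^sup>2 * v i x) (\<Sum>\<^sub>\<infinity>i\<in>I. (f i x)\<^sup>2 * v i x)
                < inverse (real (Suc n)))" ..
  define P where "P n x = (\<Sum>i\<in>Fn n. (f i x)\<^sup>2 * v i x)" for n x
  have "uniform_limit UNIV P (\<lambda>x. \<Sum>\<^sub>\<infinity>i\<in>I. (f i x)\<^sup>2 * v i x) sequentially"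
  proof (rule uniform_limitI)
    fix e :: real assume "e > 0"
    then have "eventually (\<lambda>n. inverse (real (Suc n)) < e) sequentially"
      using order_tendstoD(2)[OF LIMSEQ_inverse_real_of_nat] by blast
    then show "eventually (\<lambda>n. \<forall>x\<in>UNIV. dist (P n x) (\<Sum>\<^sub>\<infinity>i\<in>I. (f i x)\<^sup>2 * v i x) < e)
                 sequentially"
      unfolding P_def by eventually_elim (use Fn less_trans in blast)
  qed
  moreover have "continuous_on UNIV (P n)" for n
  proof -
    have "Fn n \<subseteq> I" using Fn by blast
    then show ?thesis unfolding P_def using cont vc by (intro continuous_intros) auto
  qed
  ultimately show ?thesis
    by (intro uniform_limit_theorem[of UNIV P]) (auto intro: always_eventually)
qed

lemma mu_apply_of_real:
  assumes "\<And>x. (\<lambda>i. (f i x)\<^sup>2 * k (act (- s i) x)) summable_on I"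
  shows "mu_apply act I s f (\<lambda>x. complex_of_real (k x))
       = (\<lambda>x. complex_of_real (\<Sum>\<^sub>\<infinity>i\<in>I. (f i x)\<^sup>2 * k (act (- s i) x)))"
proof
  fix x
  have "((\<lambda>i. complex_of_real ((f i x)\<^sup>2 * k (act (- s i) x)))
          has_sum complex_of_real (\<Sum>\<^sub>\<infinity>i\<in>I. (f i x)\<^sup>2 * k (act (- s i) x))) I"
    using assms by (intro has_sum_of_real) auto
  then show "mu_apply act I s f (\<lambda>x. complex_of_real (k x)) x
           = complex_of_real (\<Sum>\<^sub>\<infinity>i\<in>I. (f i x)\<^sup>2 * k (act (- s i) x))"
    unfolding mu_apply_def translate_def by (simp add: infsumI power2_eq_square mult_ac)
qed

lemma stationary_state_vanishes_on_translates:
  fixes act :: "'g::group_add \<Rightarrow> 'x::topological_space \<Rightarrow> 'x"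
  assumes cpt: "compact (UNIV :: 'x set)"
    and actc: "\<And>g. continuous_on UNIV (act g)"
    and mu: "gen_prob_measure I s f" and full: "full_support I s f"
    and stat: "stationary_state act I s f \<tau>"
    and kc: "continuous_on UNIV k" and k0: "\<And>x. 0 \<le> k x"
    and tk: "\<tau> (\<lambda>x. complex_of_real (k x)) = 0"
  shows "\<tau> (\<lambda>x. complex_of_real (k (act g x))) = 0"
proof -
  have fc: "\<And>i. i \<in> I \<Longrightarrow> continuous_on UNIV (f i)"
    and hs: "\<And>x. ((\<lambda>i. (f i x)\<^sup>2) has_sum 1) I"
    using mu unfolding gen_prob_measure_def by auto
  have st: "is_state \<tau>"
    and fixed: "\<And>h. continuous_on UNIV h \<Longrightarrow> \<tau> (mu_apply act I s f h) = \<tau> h"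
    using stat unfolding stationary_state_def by auto
  obtain xm where xm: "\<And>y. k y \<le> k xm"
    using compact_attains_sup[OF compact_continuous_image[OF kc cpt]] by auto
  define v where "v i x = k (act (- s i) x)" for i x
  have vc: "continuous_on UNIV (v i)" for i
    unfolding v_def by (rule continuous_on_compose2[OF kc actc]) auto
  have vb: "0 \<le> v i x \<and> v i x \<le> k xm" for i x unfolding v_def using k0 xm by auto
  define M where "M x = (\<Sum>\<^sub>\<infinity>i\<in>I. (f i x)\<^sup>2 * v i x)" for x
  have Mc: "continuous_on UNIV M"
    unfolding M_def by (rule continuous_on_weighted_infsum[OF cpt fc hs vc vb])
  have summable: "(\<lambda>i. (f i x)\<^sup>2 * v i x) summable_on I" for x
    using weighted_infsum_tail_bound(1)[OF hs[of x], of "\<lambda>i. v i x" "k xm" "{}"] vb by auto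
  have "\<tau> (\<lambda>x. complex_of_real (M x)) = \<tau> (mu_apply act I s f (\<lambda>x. complex_of_real (k x)))"
    using mu_apply_of_real[of f k act s I] summable by (simp add: M_def v_def)
  also have "\<dots> = 0"
    using fixed[of "\<lambda>x. complex_of_real (k x)"] kc tk by (simp add: continuous_on_of_real)
  finally have tM: "\<tau> (\<lambda>x. complex_of_real (M x)) = 0" .
  obtain \<delta> where \<delta>: "\<delta> > 0" "\<And>x. \<delta> \<le> (\<Sum>\<^sub>\<infinity>i\<in>{i\<in>I. s i = - g}. (f i x)\<^sup>2)"
    using full unfolding full_support_def by blast
  have dom: "\<delta> * k (act g x) \<le> M x" for x
  proof -
    have "\<delta> * k (act g x) \<le> (\<Sum>\<^sub>\<infinity>i\<in>{i\<in>I. s i = - g}. (f i x)\<^sup>2) * k (act g x)"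
      using \<delta>(2)[of x] k0 by (intro mult_right_mono) auto
    also have "\<dots> = (\<Sum>\<^sub>\<infinity>i\<in>{i\<in>I. s i = - g}. (f i x)\<^sup>2 * v i x)"
      by (subst infsum_cmult_left'[symmetric]) (rule infsum_cong, simp add: v_def)
    also have "\<dots> \<le> M x" unfolding M_def
      by (rule infsum_mono_neutral) (use summable summable_on_subset[OF summable] vb in auto)
    finally show ?thesis .
  qed
  show ?thesis
    using state_eq_0_if_dominated[OF st Mc _ \<delta>(1) k0 dom tM] continuous_on_compose2[OF kc actc]
    by auto
qed

lemma minimal_action_finite_translates_cover:
  fixes act :: "'g \<Rightarrow> 'x::topological_space \<Rightarrow> 'x"
  assumes cpt: "compact (UNIV :: 'x set)"
    and actc: "\<And>g. continuous_on UNIV (act g)"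
    and min: "minimal_action act" and U: "open U" "U \<noteq> {}"
  shows "\<exists>G. finite G \<and> (\<forall>y. \<exists>g\<in>G. act g y \<in> U)"
proof -
  define V where "V g = act g -` U" for g
  have "open (V g)" for g
    unfolding V_def using actc open_vimage U(1) by blast
  moreover have "UNIV \<subseteq> (\<Union>g\<in>UNIV. V g)"
  proof
    fix y
    have "U \<inter> closure (range (\<lambda>g. act g y)) \<noteq> {}"
      using min U(2) unfolding minimal_action_def by simp
    then have "U \<inter> range (\<lambda>g. act g y) \<noteq> {}" using open_Int_closure_eq_empty[OF U(1)] by blast
    then show "y \<in> (\<Union>g\<in>UNIV. V g)" unfolding V_def by auto
  qed
  ultimately obtain G where "finite G" "UNIV \<subseteq> (\<Union>g\<in>G. V g)"
    using compactE_image[OF cpt, of UNIV V] by (metis UNIV_I)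
  then show ?thesis unfolding V_def by blast
qed

lemma nonneg_eq_0_if_state_vanishes_on_translates:
  fixes k :: "'x::topological_space \<Rightarrow> real"
  assumes cpt: "compact (UNIV :: 'x set)"
    and actc: "\<And>g. continuous_on UNIV (act g)"
    and min: "minimal_action act" and st: "is_state \<tau>"
    and kc: "continuous_on UNIV k" and k0: "\<And>x. 0 \<le> k x"
    and vanish: "\<And>g. \<tau> (\<lambda>x. complex_of_real (k (act g x))) = 0"
  shows "k = (\<lambda>x. 0)"
proof (rule ccontr)
  assume "k \<noteq> (\<lambda>x. 0)"
  then obtain x0 where "k x0 \<noteq> 0" by auto
  with k0 have "0 < k x0" by (simp add: less_le)
  define c where "c = k x0 / 2"
  have c: "0 < c" "c < k x0" using \<open>0 < k x0\<close> unfolding c_def by auto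
  have "open {y. c < k y}" using kc by (intro open_Collect_less continuous_intros)
  moreover have "{y. c < k y} \<noteq> {}" using c(2) by blast
  ultimately have "\<exists>G. finite G \<and> (\<forall>y. \<exists>g\<in>G. act g y \<in> {y. c < k y})"
    by (rule minimal_action_finite_translates_cover[OF cpt actc min])
  then obtain G where G: "finite G" and cover: "\<forall>y. \<exists>g\<in>G. c < k (act g y)"
    by auto
  define S where "S y = (\<Sum>g\<in>G. k (act g y))" for y
  have kgc: "continuous_on UNIV (\<lambda>y. k (act g y))" for g
    by (rule continuous_on_compose2[OF kc actc]) auto
  have Sc: "continuous_on UNIV S"
    unfolding S_def using kgc by (intro continuous_intros) auto
  have dom: "c * 1 \<le> S y" for y
  proof -
    obtain g where g: "g \<in> G" "c < k (act g y)" using cover by blast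
    have "k (act g y) \<le> S y"
      unfolding S_def using G g(1) k0 by (intro member_le_sum) auto
    with g(2) show ?thesis by simp
  qed
  have null: "\<tau> (\<lambda>y. complex_of_real (S y)) = 0"
  proof -
    have "\<tau> (\<lambda>y. \<Sum>g\<in>G. complex_of_real (k (act g y)))
        = (\<Sum>g\<in>G. \<tau> (\<lambda>y. complex_of_real (k (act g y))))"
      by (rule state_sum[OF st G]) (intro continuous_intros kgc)
    then show ?thesis by (simp add: S_def vanish)
  qed
  have "\<tau> (\<lambda>x. complex_of_real 1) = 0"
    by (rule state_eq_0_if_dominated[where w = "\<lambda>_. 1", OF st Sc continuous_on_const c(1) _ dom null])
      simp
  then show False using st unfolding is_state_def by simp
qed

theorem mainTheorem16:
  fixes act :: "'g::group_add \<Rightarrow> 'x::t2_space \<Rightarrow> 'x"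
    and I :: "'i set" and s :: "'i \<Rightarrow> 'g" and f :: "'i \<Rightarrow> 'x \<Rightarrow> real"
    and \<tau> :: "('x \<Rightarrow> complex) \<Rightarrow> complex"
  assumes "countable (UNIV :: 'g set)"
    and "compact (UNIV :: 'x set)"
    and "action_by_homeos act"
    and "minimal_action act"
    and "gen_prob_measure I s f"
    and "full_support I s f"
    and "stationary_state act I s f \<tau>"
  shows "faithful_state \<tau>"
  unfolding faithful_state_def
proof (intro allI impI)
  fix h :: "'x \<Rightarrow> complex"
  assume hc: "continuous_on UNIV h" and h0: "\<tau> (\<lambda>x. cnj (h x) * h x) = 0"
  have actc: "\<And>g. continuous_on UNIV (act g)"
    using assms(3) unfolding action_by_homeos_def by blast
  have st: "is_state \<tau>" using assms(7) unfolding stationary_state_def by blast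
  define k where "k x = (cmod (h x))\<^sup>2" for x
  have kc: "continuous_on UNIV k" unfolding k_def using hc by (intro continuous_intros)
  have "(\<lambda>x. complex_of_real (k x)) = (\<lambda>x. cnj (h x) * h x)"
    unfolding k_def by (simp only: complex_norm_square mult.commute)
  then have "\<tau> (\<lambda>x. complex_of_real (k x)) = 0" using h0 by simp
  then have "\<tau> (\<lambda>x. complex_of_real (k (act g x))) = 0" for g
    using stationary_state_vanishes_on_translates[OF assms(2) actc assms(5-7) kc] k_def by simp
  then have "k = (\<lambda>x. 0)"
    using nonneg_eq_0_if_state_vanishes_on_translates[OF assms(2) actc assms(4) st kc] k_def by simp
  then show "h = (\<lambda>x. 0)" by (simp add: k_def fun_eq_iff)
qed

end
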